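(* Let $(R,B)$ be an EIC problem with problem graph $G=(V,E)$, and let $\mathcal{A}_{(R,B)}$ be the image of its column repetition function. Then $$\omega(\overline{G})\le \mathrm{minrk}_2(G)\le \mathrm{rminrk}_2(G,\mathcal{A}_{(R,B)})\le \chi(\overline{G}).$$
   Context: An EIC problem is a pair $(R,B)$ of matrices in $\mathbb{F}_2^{n\times m}$ with disjoint supports (node $u$ needs block $a$ iff $R_{ua}=1$, has block $a$ iff $B_{ua}=1$). Requirement pairs: $P=\{(u,a):R_{ua}=1\}$. The problem graph $G=(V,E)$ is the directed graph with vertices $V=\{v_{(u,a)}:(u,a)\in P\}$ and an edge from $v_{(u,a)}$ to $v_{(w,b)}$ (for distinct vertices) iff $B_{ub}=1$ or $a=b$. A matrix $A'\in\mathbb{F}_2^{|V|\times|V|}$ (indexed by $V$) fits $G$ if all diagonal entries are $1$ and $A'_{xy}=0$ whenever $x\neq y$, $(x,y)\notin E$. $\mathrm{minrk}_2(G)$ is the minimum rank over $\mathbb{F}_2$ of a matrix fitting $G$. The column repetition function $\phi_{(R,B)}:\mathbb{F}_2^{|V|\times m}\to\mathbb{F}_2^{|V|\times|V|}$ sends $A$ (rows indexed by $V$) to the matrix whose column indexed by $v_{(u,a)}$ is the $a$-th column of $A$; $\mathcal{A}_{(R,B)}$ is its image, and $\mathrm{rminrk}_2(G,\mathcal{A}_{(R,B)})$ is the minimum rank of a matrix in $\mathcal{A}_{(R,B)}$ fitting $G$. For a directed graph $H$ (loops disregarded): its complement $\overline H$ has an edge $(x,y)$, $x\ne y$, iff $(x,y)$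 is not an edge of $H$; a clique is a vertex set in which every ordered pair of distinct vertices is an edge; $\omega(H)$ is the maximum clique size; an independent set is a vertex set containing no edge in either direction; $\chi(H)$ is the minimum number of parts in a partition of the vertices into independent sets. *)

theory Defs
  imports "HOL-Library.Z2" "HOL-Library.Disjoint_Sets" "HOL-Library.Product_Lexorder" "Jordan_Normal_Form.DL_Rank"
begin

text \<open>F_2 is the field type bit. Matrices are Jordan_Normal_Form matrices over bit;
 rows of R, B are nodes u < n, columns are blocks a < m.\<close>

definition eic_problem :: "bit mat \<Rightarrow> bit mat \<Rightarrow> nat \<Rightarrow> nat \<Rightarrow> bool" where
  "eic_problem R B n m \<longleftrightarrow> R \<in> carrier_mat n m \<and> B \<in> carrier_mat n m \<and>
     (\<forall>u<n. \<forall>a<m. \<not> (R $$ (u,a) = 1 \<and> B $$ (u,a) = 1))"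

definition req_pairs :: "bit mat \<Rightarrow> (nat \<times> nat) set" where
  "req_pairs R = {(u,a). u < dim_row R \<and> a < dim_col R \<and> R $$ (u,a) = 1}"

definition pg_edge :: "bit mat \<Rightarrow> (nat \<times> nat) \<Rightarrow> (nat \<times> nat) \<Rightarrow> bool" where
  "pg_edge B x y \<longleftrightarrow> x \<noteq> y \<and> (B $$ (fst x, snd y) = 1 \<or> snd x = snd y)"

text \<open>A fixed enumeration of V, used to index |V| x |V| matrices: index i < |V|
  corresponds to vertex (vlist R ! i).\<close>
definition vlist :: "bit mat \<Rightarrow> (nat \<times> nat) list" where
  "vlist R = sorted_list_of_set (req_pairs R)"

definition fits :: "bit mat \<Rightarrow> bit mat \<Rightarrow> bit mat \<Rightarrow> bool" where
  "fits R B A' \<longleftrightarrow> (let N = card (req_pairs R); vs = vlist R in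
     A' \<in> carrier_mat N N \<and> (\<forall>i<N. A' $$ (i,i) = 1) \<and>
     (\<forall>i<N. \<forall>j<N. i \<noteq> j \<and> \<not> pg_edge B (vs ! i) (vs ! j) \<longrightarrow> A' $$ (i,j) = 0))"

definition rank2 :: "bit mat \<Rightarrow> nat" where
  "rank2 A = vec_space.rank (dim_row A) A"

definition minrk2 :: "bit mat \<Rightarrow> bit mat \<Rightarrow> nat" where
  "minrk2 R B = (LEAST r. \<exists>A'. fits R B A' \<and> rank2 A' = r)"

definition col_rep :: "bit mat \<Rightarrow> bit mat \<Rightarrow> bit mat" where
  "col_rep R A = (let N = card (req_pairs R); vs = vlist R in
     mat N N (\<lambda>(i,j). A $$ (i, snd (vs ! j))))"

definition col_rep_image :: "bit mat \<Rightarrow> bit mat set" where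
  "col_rep_image R = col_rep R ` carrier_mat (card (req_pairs R)) (dim_col R)"

definition rminrk2 :: "bit mat \<Rightarrow> bit mat \<Rightarrow> bit mat set \<Rightarrow> nat" where
  "rminrk2 R B \<A> = (LEAST r. \<exists>A'\<in>\<A>. fits R B A' \<and> rank2 A' = r)"

text \<open>Generic directed graphs given by a vertex set and an edge relation (loops disregarded).\<close>
definition dg_compl :: "('v \<Rightarrow> 'v \<Rightarrow> bool) \<Rightarrow> 'v \<Rightarrow> 'v \<Rightarrow> bool" where
  "dg_compl E x y \<longleftrightarrow> x \<noteq> y \<and> \<not> E x y"

definition dg_clique :: "('v \<Rightarrow> 'v \<Rightarrow> bool) \<Rightarrow> 'v set \<Rightarrow> bool" where
  "dg_clique E S \<longleftrightarrow> (\<forall>x\<in>S. \<forall>y\<in>S. x \<noteq> y \<longrightarrow> E x y)"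

definition dg_omega :: "'v set \<Rightarrow> ('v \<Rightarrow> 'v \<Rightarrow> bool) \<Rightarrow> nat" where
  "dg_omega V E = Max {card S | S. S \<subseteq> V \<and> dg_clique E S}"

definition dg_indep :: "('v \<Rightarrow> 'v \<Rightarrow> bool) \<Rightarrow> 'v set \<Rightarrow> bool" where
  "dg_indep E S \<longleftrightarrow> (\<forall>x\<in>S. \<forall>y\<in>S. x \<noteq> y \<longrightarrow> \<not> E x y)"

definition dg_chi :: "'v set \<Rightarrow> ('v \<Rightarrow> 'v \<Rightarrow> bool) \<Rightarrow> nat" where
  "dg_chi V E = (LEAST k. \<exists>Q. partition_on V Q \<and> card Q = k \<and> (\<forall>S\<in>Q. dg_indep E S))"

end

theory Submission
  imports Defs "Jordan_Normal_Form.DL_Rank_Submatrix"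
begin

text \<open>Lower bound: a clique S of the complement of G indexes a principal submatrix of any
  matrix fitting G that is the identity, so its rank is at least |S|.
  Upper bound: a proper colouring of the complement is a partition of V into cliques of G.
  The code broadcasting, for each clique, the sum of the blocks requested in it has in row v
  ones exactly at the blocks requested in the clique of v. Its column repetition fits G,
  since v is adjacent to every vertex requesting such a block, and it is a sum of one
  rank-one matrix per clique.\<close>

lemma rank_sum_rank_one_le:
  fixes f g :: "'i \<Rightarrow> nat \<Rightarrow> 'a::field"
  assumes "finite Q"
  shows "vec_space.rank n (mat n nc (\<lambda>(r,c). \<Sum>S\<in>Q. f S r * g S c)) \<le> card Q"
  using assms
proof (induction Q rule: finite_induct)
  case empty
  have "mat n nc (\<lambda>(r,c). \<Sum>S\<in>{}. f S r * g S c) = (0\<^sub>m n nc :: 'a mat)"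
    by (rule eq_matI) auto
  then show ?case
    by (simp only: vec_space.rank_0I)
next
  case (insert S0 Q)
  let ?P = "mat n nc (\<lambda>(r,c). f S0 r * g S0 c)"
  let ?M = "mat n nc (\<lambda>(r,c). \<Sum>S\<in>Q. f S r * g S c)"
  have "mat n nc (\<lambda>(r,c). \<Sum>S\<in>insert S0 Q. f S r * g S c) = ?P + ?M"
    by (rule eq_matI) (use insert in auto)
  moreover have "vec_space.rank n (?P + ?M) \<le> vec_space.rank n ?P + vec_space.rank n ?M"
    by (rule vec_space.rank_subadditive) auto
  moreover have "vec_space.rank n ?P \<le> 1"
    by (rule vec_space.rank_le_1_product_entries[where f = "f S0" and g = "g S0"]) auto
  ultimately show ?case
    using insert by simp
qed

lemma card_le_rank_if_principal_submatrix_one: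
  fixes A :: "'a::field mat"
  assumes A: "A \<in> carrier_mat n n" and I: "I \<subseteq> {..<n}"
    and diag: "\<And>i. i \<in> I \<Longrightarrow> A $$ (i,i) = 1"
    and off_diag: "\<And>i j. i \<in> I \<Longrightarrow> j \<in> I \<Longrightarrow> i \<noteq> j \<Longrightarrow> A $$ (i,j) = 0"
  shows "card I \<le> vec_space.rank n A"
proof -
  have I_eq: "{i. i < n \<and> i \<in> I} = I"
    using I by auto
  have "submatrix A I I = 1\<^sub>m (card I)"
  proof (rule eq_matI)
    fix i j assume "i < dim_row (1\<^sub>m (card I))" "j < dim_col (1\<^sub>m (card I))"
    then have i: "i < card I" and j: "j < card I"
      by auto
    have "pick I i \<in> I" "pick I j \<in> I"
      using i j by (auto intro: pick_in_set)
    moreover have "pick I i = pick I j \<longleftrightarrow> i = j"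
      using i j pick_mono by (metis linorder_neqE_nat less_irrefl)
    ultimately show "submatrix A I I $$ (i,j) = 1\<^sub>m (card I) $$ (i,j)"
      using A I_eq i j diag off_diag by (auto simp: submatrix_def)
  qed (use A I_eq in \<open>auto simp: dim_submatrix\<close>)
  then have "card {j. j < n \<and> j \<in> I} \<le> vec_space.rank n A"
    by (intro vec_space.rank_gt_minor[OF A, of I]) simp
  then show ?thesis
    using I_eq by simp
qed

lemma dg_indep_compl_iff_dg_clique: "dg_indep (dg_compl E) S \<longleftrightarrow> dg_clique E S"
  unfolding dg_indep_def dg_compl_def dg_clique_def by blast

lemma dg_omega_le:
  assumes "finite V" and "\<And>S. S \<subseteq> V \<Longrightarrow> dg_clique E S \<Longrightarrow> card S \<le> k"
  shows "dg_omega V E \<le> k"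
  unfolding dg_omega_def
proof (rule Max.boundedI)
  show "finite {card S |S. S \<subseteq> V \<and> dg_clique E S}"
    by (rule finite_subset[of _ "card ` Pow V"]) (use assms(1) in auto)
  show "{card S |S. S \<subseteq> V \<and> dg_clique E S} \<noteq> {}"
    unfolding dg_clique_def by blast
qed (use assms(2) in blast)

lemma dg_chi_attained:
  "\<exists>Q. partition_on V Q \<and> card Q = dg_chi V E \<and> (\<forall>S\<in>Q. dg_indep E S)"
  unfolding dg_chi_def
  by (rule LeastI_ex) (use partition_on_singletons[of V] in \<open>auto simp: dg_indep_def\<close>)

lemma pg_edge_if_clique_requests_block:
  assumes "dg_clique (pg_edge B) S" "x \<in> S" "z \<in> S" "x \<noteq> y" "snd y = snd z"
  shows "pg_edge B x y"
  using assms unfolding dg_clique_def pg_edge_def by (cases "x = z") auto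

lemma finite_req_pairs: "finite (req_pairs R)"
  by (rule finite_subset[of _ "{..<dim_row R} \<times> {..<dim_col R}"]) (auto simp: req_pairs_def)

lemma bij_betw_nth_vlist: "bij_betw ((!) (vlist R)) {..<card (req_pairs R)} (req_pairs R)"
proof -
  have "distinct (vlist R)" "set (vlist R) = req_pairs R"
    unfolding vlist_def using finite_req_pairs by auto
  then show ?thesis
    by (intro bij_betw_nth) (auto simp: distinct_card[symmetric])
qed

lemma snd_nth_vlist_less:
  "j < card (req_pairs R) \<Longrightarrow> snd (vlist R ! j) < dim_col R"
  using bij_betw_apply[OF bij_betw_nth_vlist] by (fastforce simp: req_pairs_def)

lemma card_clique_compl_le_rank2:
  assumes fit: "fits R B A'" and S: "S \<subseteq> req_pairs R"
    and clique: "dg_clique (dg_compl (pg_edge B)) S"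
  shows "card S \<le> rank2 A'"
proof -
  define N where "N = card (req_pairs R)"
  define I where "I = {i. i < N \<and> vlist R ! i \<in> S}"
  have bij: "bij_betw ((!) (vlist R)) {..<N} (req_pairs R)"
    unfolding N_def by (rule bij_betw_nth_vlist)
  have "(!) (vlist R) ` I = S"
    using S bij_betw_imp_surj_on[OF bij] unfolding I_def by (fastforce simp: image_iff)
  then have "bij_betw ((!) (vlist R)) I S"
    by (intro bij_betw_subset[OF bij]) (auto simp: I_def)
  then have "card S = card I"
    by (simp add: bij_betw_same_card)
  also have "card I \<le> vec_space.rank N A'"
  proof (rule card_le_rank_if_principal_submatrix_one)
    fix i j assume "i \<in> I" "j \<in> I" "i \<noteq> j"
    then have "vlist R ! i \<noteq> vlist R ! j" "\<not> pg_edge B (vlist R ! i) (vlist R ! j)"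
      using bij clique unfolding I_def bij_betw_def inj_on_def dg_clique_def dg_compl_def
      by auto
    then show "A' $$ (i,j) = 0"
      using fit \<open>i \<in> I\<close> \<open>j \<in> I\<close> \<open>i \<noteq> j\<close> unfolding fits_def Let_def I_def N_def by auto
  qed (use fit in \<open>auto simp: fits_def Let_def I_def N_def\<close>)
  also have "\<dots> = rank2 A'"
    using fit unfolding fits_def Let_def rank2_def N_def by auto
  finally show ?thesis .
qed

definition clique_cover_code :: "bit mat \<Rightarrow> (nat \<times> nat) set set \<Rightarrow> bit mat" where
  "clique_cover_code R Q = mat (card (req_pairs R)) (dim_col R)
     (\<lambda>(i,b). \<Sum>S\<in>Q. of_bool (vlist R ! i \<in> S) * of_bool (b \<in> snd ` S))"

lemma clique_cover_code_carrier:
  "clique_cover_code R Q \<in> carrier_mat (card (req_pairs R)) (dim_col R)"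
  unfolding clique_cover_code_def by simp

lemma col_rep_clique_cover_code:
  "col_rep R (clique_cover_code R Q) = mat (card (req_pairs R)) (card (req_pairs R))
     (\<lambda>(i,j). \<Sum>S\<in>Q. of_bool (vlist R ! i \<in> S) * of_bool (snd (vlist R ! j) \<in> snd ` S))"
  by (rule eq_matI)
    (auto simp: col_rep_def clique_cover_code_def Let_def snd_nth_vlist_less simp del: of_bool_conj)

lemma rank2_col_rep_clique_cover_code_le:
  "finite Q \<Longrightarrow> rank2 (col_rep R (clique_cover_code R Q)) \<le> card Q"
  unfolding col_rep_clique_cover_code rank2_def dim_row_mat by (rule rank_sum_rank_one_le)

lemma fits_col_rep_clique_cover_code:
  assumes part: "partition_on (req_pairs R) Q" and cliques: "\<And>S. S \<in> Q \<Longrightarrow> dg_clique (pg_edge B) S"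
  shows "fits R B (col_rep R (clique_cover_code R Q))"
proof -
  define N where "N = card (req_pairs R)"
  define vs where "vs = vlist R"
  have bij: "bij_betw ((!) vs) {..<N} (req_pairs R)"
    unfolding N_def vs_def by (rule bij_betw_nth_vlist)
  have finite_Q: "finite Q"
    using finite_elements[OF finite_req_pairs part] .
  have diag: "(\<Sum>S\<in>Q. of_bool (vs ! i \<in> S) * of_bool (snd (vs ! i) \<in> snd ` S)) = (1 :: bit)"
    if "i < N" for i
  proof -
    have "vs ! i \<in> req_pairs R"
      using bij_betw_apply[OF bij] that by simp
    then obtain S0 where S0: "S0 \<in> Q" "vs ! i \<in> S0"
      using partition_onD1[OF part] by auto
    have "vs ! i \<in> S \<longleftrightarrow> S = S0" if "S \<in> Q" for S
      using partition_onD2[OF part] S0 that unfolding disjoint_def by blast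
    then have "(\<Sum>S\<in>Q. of_bool (vs ! i \<in> S) * of_bool (snd (vs ! i) \<in> snd ` S))
        = (\<Sum>S\<in>Q. if S = S0 then 1 else 0 :: bit)"
      using S0 by (intro sum.cong) auto
    then show ?thesis
      using S0 finite_Q by simp
  qed
  have off_diag: "(\<Sum>S\<in>Q. of_bool (vs ! i \<in> S) * of_bool (snd (vs ! j) \<in> snd ` S)) = (0 :: bit)"
    if "i < N" "j < N" "i \<noteq> j" "\<not> pg_edge B (vs ! i) (vs ! j)" for i j
  proof (intro sum.neutral ballI)
    fix S assume "S \<in> Q"
    have distinct_ij: "vs ! i \<noteq> vs ! j"
      using bij that(1-3) unfolding bij_betw_def inj_on_def by auto
    have "\<not> (vs ! i \<in> S \<and> z \<in> S \<and> snd (vs ! j) = snd z)" for z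
      using pg_edge_if_clique_requests_block[OF cliques[OF \<open>S \<in> Q\<close>]] distinct_ij that(4)
      by blast
    then have "\<not> (vs ! i \<in> S \<and> snd (vs ! j) \<in> snd ` S)"
      by auto
    then show "of_bool (vs ! i \<in> S) * of_bool (snd (vs ! j) \<in> snd ` S) = (0 :: bit)"
      by auto
  qed
  show ?thesis
    unfolding fits_def Let_def col_rep_clique_cover_code N_def[symmetric] vs_def[symmetric]
    using diag off_diag by simp
qed

lemma fits_one_mat: "fits R B (1\<^sub>m (card (req_pairs R)))"
  unfolding fits_def Let_def by simp

lemma minrk2_attained: "\<exists>A'. fits R B A' \<and> rank2 A' = minrk2 R B"
  unfolding minrk2_def by (rule LeastI_ex) (use fits_one_mat in blast)

lemma minrk2_le_rminrk2:
  assumes "\<exists>A'\<in>\<A>. fits R B A'"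
  shows "minrk2 R B \<le> rminrk2 R B \<A>"
proof -
  obtain A' where "A' \<in> \<A>" "fits R B A'" "rank2 A' = rminrk2 R B \<A>"
    unfolding rminrk2_def using LeastI_ex[of "\<lambda>r. \<exists>A'\<in>\<A>. fits R B A' \<and> rank2 A' = r"] assms
    by blast
  then show ?thesis
    unfolding minrk2_def by (metis (mono_tags, lifting) Least_le)
qed

lemma rminrk2_le_rank2: "A' \<in> \<A> \<Longrightarrow> fits R B A' \<Longrightarrow> rminrk2 R B \<A> \<le> rank2 A'"
  unfolding rminrk2_def by (rule Least_le) blast

theorem corollary1:
  fixes R B :: "bit mat" and n m :: nat
  assumes "eic_problem R B n m"
  shows "dg_omega (req_pairs R) (dg_compl (pg_edge B)) \<le> minrk2 R B
    \<and> minrk2 R B \<le> rminrk2 R B (col_rep_image R)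
    \<and> rminrk2 R B (col_rep_image R) \<le> dg_chi (req_pairs R) (dg_compl (pg_edge B))"
proof -
  obtain A0 where "fits R B A0" "rank2 A0 = minrk2 R B"
    using minrk2_attained by blast
  then have omega: "dg_omega (req_pairs R) (dg_compl (pg_edge B)) \<le> minrk2 R B"
    using dg_omega_le[OF finite_req_pairs] card_clique_compl_le_rank2 by metis
  obtain Q where Q: "partition_on (req_pairs R) Q"
      "card Q = dg_chi (req_pairs R) (dg_compl (pg_edge B))"
      "\<forall>S\<in>Q. dg_clique (pg_edge B) S"
    using dg_chi_attained by (metis dg_indep_compl_iff_dg_clique)
  define A where "A = col_rep R (clique_cover_code R Q)"
  have "A \<in> col_rep_image R"
    unfolding A_def col_rep_image_def using clique_cover_code_carrier by blast
  moreover have "fits R B A"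
    unfolding A_def using Q by (simp add: fits_col_rep_clique_cover_code)
  moreover have "rank2 A \<le> card Q"
    unfolding A_def using finite_elements[OF finite_req_pairs Q(1)]
    by (rule rank2_col_rep_clique_cover_code_le)
  ultimately show ?thesis
    using omega minrk2_le_rminrk2 rminrk2_le_rank2 Q(2) by fastforce
qed

end
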